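(* Let $G=(V,E)$ be a connected simple graph on $n$ vertices equipped with the minimum degree conductance function $c(u,v)=\frac{1}{\min[d(u),d(v)]}$, and for every $e\in E$ let $R(e)$ denote the effective resistance between the endpoints of $e$ in the electrical network in which each edge $e$ is a resistor of resistance $1/c(e)$. Then for every set $T\subseteq E$ of edges forming a spanning tree of $G$, $CYC[G,c]\le 2(n-1)\sum_{e\in T}R(e)$.
   Context: $d(v)$ is the degree of $v$. The effective resistance $R(u,v)$ is the voltage at $u$ when a current of 1 unit is injected at $u$ and $v$ is grounded. The random walk associated with $c$ moves from $v$ to a neighbor $u$ with probability $\frac{c(v,u)}{\sum_{w\in N(v)}c(v,w)}$; $H[u,v]$ is the expected number of steps from $u$ to reach $v$; the cyclic cover time is $CYC[G,c]=\min_{\sigma}\left(\sum_{i=1}^{n-1}H[v_{\sigma(i)},v_{\sigma(i+1)}]+H[v_{\sigma(n)},v_{\sigma(1)}]\right)$, minimum over orderings $\sigma$ of the vertices. *)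

theory Defs
  imports Complex_Main
begin

definition simple_graph :: "'a set \<Rightarrow> 'a set set \<Rightarrow> bool" where
  "simple_graph V E \<longleftrightarrow> finite V \<and>
     (\<forall>e\<in>E. \<exists>u v. u \<in> V \<and> v \<in> V \<and> u \<noteq> v \<and> e = {u, v})"

definition nbrs :: "'a set set \<Rightarrow> 'a \<Rightarrow> 'a set" where
  "nbrs E v = {u. {v, u} \<in> E}"

definition deg :: "'a set set \<Rightarrow> 'a \<Rightarrow> nat" where
  "deg E v = card (nbrs E v)"

definition connected_graph :: "'a set \<Rightarrow> 'a set set \<Rightarrow> bool" where
  "connected_graph V E \<longleftrightarrow>
     (\<forall>u\<in>V. \<forall>v\<in>V. (u, v) \<in> {(x, y). {x, y} \<in> E}\<^sup>*)"

definition has_cycle :: "'a set set \<Rightarrow> bool" where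
  "has_cycle E \<longleftrightarrow> (\<exists>xs. distinct xs \<and> length xs \<ge> 3 \<and>
     (\<forall>i < length xs. {xs ! i, xs ! ((i + 1) mod length xs)} \<in> E))"

definition spanning_tree :: "'a set \<Rightarrow> 'a set set \<Rightarrow> 'a set set \<Rightarrow> bool" where
  "spanning_tree V E T \<longleftrightarrow> T \<subseteq> E \<and> connected_graph V T \<and> \<not> has_cycle T"

definition mindeg_cond :: "'a set set \<Rightarrow> 'a \<Rightarrow> 'a \<Rightarrow> real" where
  "mindeg_cond E u v = 1 / real (min (deg E u) (deg E v))"

text \<open>Effective resistance: voltage at u when unit current is injected at u and v is grounded
  (Kirchhoff's current law at every vertex, edge e has conductance c e).\<close>
definition is_potential ::
  "('a \<Rightarrow> 'a \<Rightarrow> real) \<Rightarrow> 'a set \<Rightarrow> 'a set set \<Rightarrow> 'a \<Rightarrow> 'a \<Rightarrow> ('a \<Rightarrow> real) \<Rightarrow> bool" where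
  "is_potential c V E u v \<phi> \<longleftrightarrow> \<phi> v = 0 \<and>
     (\<forall>w\<in>V. (\<Sum>x\<in>nbrs E w. c w x * (\<phi> w - \<phi> x)) =
             (if w = u then 1 else 0) - (if w = v then 1 else 0))"

definition eff_res :: "('a \<Rightarrow> 'a \<Rightarrow> real) \<Rightarrow> 'a set \<Rightarrow> 'a set set \<Rightarrow> 'a \<Rightarrow> 'a \<Rightarrow> real" where
  "eff_res c V E u v = (THE r. \<exists>\<phi>. is_potential c V E u v \<phi> \<and> r = \<phi> u)"

definition edge_res :: "('a \<Rightarrow> 'a \<Rightarrow> real) \<Rightarrow> 'a set \<Rightarrow> 'a set set \<Rightarrow> 'a set \<Rightarrow> real" where
  "edge_res c V E e = (let p = (SOME p. e = {fst p, snd p}) in eff_res c V E (fst p) (snd p))"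

definition trans_prob :: "('a \<Rightarrow> 'a \<Rightarrow> real) \<Rightarrow> 'a set set \<Rightarrow> 'a \<Rightarrow> 'a \<Rightarrow> real" where
  "trans_prob c E x y =
     (if y \<in> nbrs E x then c x y / (\<Sum>w\<in>nbrs E x. c x w) else 0)"

text \<open>avoid c V E u v k x = probability that the walk started at u has not visited v
  at any of the times 0..k and is at x at time k.\<close>
fun avoid :: "('a \<Rightarrow> 'a \<Rightarrow> real) \<Rightarrow> 'a set \<Rightarrow> 'a set set \<Rightarrow> 'a \<Rightarrow> 'a \<Rightarrow> nat \<Rightarrow> 'a \<Rightarrow> real" where
  "avoid c V E u v 0 x = (if x = u \<and> u \<noteq> v then 1 else 0)"
| "avoid c V E u v (Suc k) y =
     (if y \<in> V - {v} then (\<Sum>x\<in>V - {v}. avoid c V E u v k x * trans_prob c E x y) else 0)"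

text \<open>Probability that the first visit to v happens exactly at step k+1.\<close>
definition first_hit_prob :: "('a \<Rightarrow> 'a \<Rightarrow> real) \<Rightarrow> 'a set \<Rightarrow> 'a set set \<Rightarrow> 'a \<Rightarrow> 'a \<Rightarrow> nat \<Rightarrow> real" where
  "first_hit_prob c V E u v k = (\<Sum>x\<in>V - {v}. avoid c V E u v k x * trans_prob c E x v)"

definition hit_time :: "('a \<Rightarrow> 'a \<Rightarrow> real) \<Rightarrow> 'a set \<Rightarrow> 'a set set \<Rightarrow> 'a \<Rightarrow> 'a \<Rightarrow> real" where
  "hit_time c V E u v = (\<Sum>k. real (Suc k) * first_hit_prob c V E u v k)"

definition cyc_sum :: "('a \<Rightarrow> 'a \<Rightarrow> real) \<Rightarrow> 'a set \<Rightarrow> 'a set set \<Rightarrow> 'a list \<Rightarrow> real" where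
  "cyc_sum c V E xs =
     (\<Sum>i<length xs. hit_time c V E (xs ! i) (xs ! ((i + 1) mod length xs)))"

definition CYC :: "('a \<Rightarrow> 'a \<Rightarrow> real) \<Rightarrow> 'a set \<Rightarrow> 'a set set \<Rightarrow> real" where
  "CYC c V E = Min {cyc_sum c V E xs | xs. distinct xs \<and> set xs = V}"

end

theory Submission
  imports Defs
begin

text \<open>
  The probability that the walk started at \<open>u\<close> has avoided \<open>v\<close> for \<open>k\<close> steps decays
  geometrically, so the hitting times are finite and satisfy the first-step equations
  \<open>H[u,v] = 1 + \<Sum>\<^sub>w P(u,w) H[w,v]\<close>. With \<open>c(x) = \<Sum>\<^sub>y c(x,y)\<close> and \<open>D = \<Sum>\<^sub>x c(x)\<close>
  this makes \<open>x \<mapsto> (H[x,v] - H[x,u] + H[v,u]) / D\<close> a solution of Kirchhoff's equations for a unit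
  current from \<open>u\<close> to \<open>v\<close>, so \<open>R(u,v) = (H[u,v] + H[v,u]) / D\<close> (commute time identity).
  Hitting times satisfy the triangle inequality, so a cyclic tour can be grown along a spanning
  tree by inserting each new leaf \<open>l\<close> right after its parent \<open>p\<close>, at extra cost at most
  \<open>H[p,l] + H[l,p] = D R(p,l)\<close>. Hence \<open>CYC \<le> D \<Sum>\<^sub>e\<^sub>\<in>\<^sub>T R(e)\<close>. For the minimum degree
  conductance, charging every edge to its endpoint of smaller degree shows that each vertex except
  one of maximal degree receives total charge at most \<open>1\<close>, so \<open>D \<le> 2(n - 1)\<close>.
\<close>

section \<open>Hitting times of reversible random walks\<close>

lemma summable_Suc_times_power:
  fixes x :: real
  assumes "0 \<le> x" "x < 1"
  shows "summable (\<lambda>n. real (Suc n) * x ^ n)"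
proof -
  have "summable (\<lambda>n. diffs (\<lambda>_. 1::real) n * x ^ n)"
    by (rule termdiff_converges[where K=1]) (use assms in \<open>auto intro: summable_geometric\<close>)
  then show ?thesis by (simp add: diffs_def)
qed

lemma avoid_from_target: "avoid c V E v v k x = 0"
  by (induction k arbitrary: x) auto

lemma hit_time_self: "hit_time c V E v v = 0"
  by (simp add: hit_time_def first_hit_prob_def avoid_from_target)

locale conductance_walk =
  fixes V :: "'a set" and E :: "'a set set" and c :: "'a \<Rightarrow> 'a \<Rightarrow> real"
  assumes finite_V: "finite V"
    and edge_in_V: "\<And>e. e \<in> E \<Longrightarrow> \<exists>u v. u \<in> V \<and> v \<in> V \<and> u \<noteq> v \<and> e = {u, v}"
    and connected: "connected_graph V E"
    and cond_pos: "\<And>x y. y \<in> nbrs E x \<Longrightarrow> c x y > 0"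
    and cond_sym: "\<And>x y. c x y = c y x"
    and exists_other_vertex: "\<And>x. x \<in> V \<Longrightarrow> \<exists>y\<in>V. y \<noteq> x"
begin

abbreviation P :: "'a \<Rightarrow> 'a \<Rightarrow> real" where "P \<equiv> trans_prob c E"

definition cond_sum :: "'a \<Rightarrow> real" where "cond_sum x = (\<Sum>y\<in>nbrs E x. c x y)"

definition cond_total :: real where "cond_total = (\<Sum>x\<in>V. cond_sum x)"

lemma nbrsD: "y \<in> nbrs E x \<Longrightarrow> x \<in> V \<and> y \<in> V \<and> x \<noteq> y"
proof -
  assume "y \<in> nbrs E x"
  then have "{x, y} \<in> E" by (simp add: nbrs_def)
  from edge_in_V[OF this] obtain u v where "u \<in> V" "v \<in> V" "u \<noteq> v" "{x, y} = {u, v}" by blast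
  then show ?thesis by (auto simp: doubleton_eq_iff)
qed

lemma nbrs_sym: "y \<in> nbrs E x \<longleftrightarrow> x \<in> nbrs E y"
  by (simp add: nbrs_def insert_commute)

lemma nbrs_subset: "nbrs E x \<subseteq> V"
  using nbrsD by blast

lemma finite_nbrs: "finite (nbrs E x)"
  using nbrs_subset finite_V finite_subset by blast

lemma nbrs_nonempty:
  assumes "x \<in> V" shows "nbrs E x \<noteq> {}"
proof -
  obtain y where y: "y \<in> V" "y \<noteq> x" using exists_other_vertex[OF assms] by blast
  have "(x, y) \<in> {(a, b). {a, b} \<in> E}\<^sup>*" using connected assms y by (simp add: connected_graph_def)
  then show ?thesis
  proof (cases rule: converse_rtranclE)
    case base then show ?thesis using y by simp
  next
    case (step z) then show ?thesis by (auto simp: nbrs_def)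
  qed
qed

lemma cond_sum_pos: "x \<in> V \<Longrightarrow> cond_sum x > 0"
  unfolding cond_sum_def using nbrs_nonempty finite_nbrs cond_pos by (intro sum_pos) auto

lemma cond_total_pos: "V \<noteq> {} \<Longrightarrow> cond_total > 0"
  unfolding cond_total_def using finite_V cond_sum_pos by (intro sum_pos) auto

lemma sum_nbrs_swap: "(\<Sum>x\<in>V. \<Sum>y\<in>nbrs E x. h x y) = (\<Sum>x\<in>V. \<Sum>y\<in>nbrs E x. h y x)"
proof -
  define S where "S = Sigma V (nbrs E)"
  have "(\<Sum>x\<in>V. \<Sum>y\<in>nbrs E x. h x y) = (\<Sum>(x, y)\<in>S. h x y)"
    unfolding S_def using finite_V finite_nbrs by (simp add: sum.Sigma)
  also have "\<dots> = (\<Sum>(x, y)\<in>S. h y x)"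
    by (rule sum.reindex_bij_witness[where i=prod.swap and j=prod.swap])
       (auto simp: S_def nbrs_sym dest: nbrsD)
  also have "\<dots> = (\<Sum>x\<in>V. \<Sum>y\<in>nbrs E x. h y x)"
    unfolding S_def using finite_V finite_nbrs by (simp add: sum.Sigma)
  finally show ?thesis .
qed

lemma P_eq: "P x y = (if y \<in> nbrs E x then c x y / cond_sum x else 0)"
  by (simp add: trans_prob_def cond_sum_def)

lemma P_nonneg: "x \<in> V \<Longrightarrow> P x y \<ge> 0"
  using cond_pos[of y x] cond_sum_pos[of x] by (auto simp: P_eq less_imp_le)

lemma P_pos: "y \<in> nbrs E x \<Longrightarrow> P x y > 0"
  using cond_pos[of y x] cond_sum_pos[of x] nbrsD[of y x] by (simp add: P_eq)

lemma sum_P_times_eq_sum_nbrs: "(\<Sum>y\<in>V. P x y * g y) = (\<Sum>y\<in>nbrs E x. P x y * g y)"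
  by (rule sum.mono_neutral_right) (auto simp: finite_V nbrs_subset P_eq)

lemma sum_P_eq_1: "x \<in> V \<Longrightarrow> (\<Sum>y\<in>V. P x y) = 1"
proof -
  assume x: "x \<in> V"
  have "(\<Sum>y\<in>V. P x y) = (\<Sum>y\<in>nbrs E x. c x y / cond_sum x)"
    using sum_P_times_eq_sum_nbrs[of x "\<lambda>_. 1"] by (simp add: P_eq)
  also have "\<dots> = 1"
    using cond_sum_pos[OF x] by (simp add: sum_divide_distrib[symmetric] cond_sum_def)
  finally show ?thesis .
qed

lemma sum_P_remove: "v \<in> V \<Longrightarrow> x \<in> V \<Longrightarrow> (\<Sum>y\<in>V - {v}. P x y) = 1 - P x v"
  using sum_P_eq_1[of x] finite_V by (simp add: sum_diff1)

lemma avoid_outside: "u \<in> V \<Longrightarrow> x \<notin> V - {v} \<Longrightarrow> avoid c V E u v k x = 0"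
  by (cases k) auto

lemma avoid_nonneg: "u \<in> V \<Longrightarrow> avoid c V E u v k x \<ge> 0"
  by (induction k arbitrary: x) (auto intro!: sum_nonneg mult_nonneg_nonneg P_nonneg)

lemma avoid_add:
  assumes "u \<in> V"
  shows "avoid c V E u v (a + b) y = (\<Sum>w\<in>V - {v}. avoid c V E u v a w * avoid c V E w v b y)"
proof (induction b arbitrary: y)
  case 0
  have "(\<Sum>w\<in>V - {v}. avoid c V E u v a w * avoid c V E w v 0 y)
      = (\<Sum>w\<in>V - {v}. if w = y then avoid c V E u v a w else 0)"
    by (rule sum.cong) auto
  also have "\<dots> = avoid c V E u v a y"
    using finite_V avoid_outside[OF assms] by auto
  finally show ?case by simp
next
  case (Suc b)
  show ?case
  proof (cases "y \<in> V - {v}")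
    case True
    have "avoid c V E u v (a + Suc b) y
        = (\<Sum>x\<in>V - {v}. \<Sum>w\<in>V - {v}. avoid c V E u v a w * avoid c V E w v b x * P x y)"
      using True Suc by (simp add: sum_distrib_right)
    also have "\<dots> = (\<Sum>w\<in>V - {v}. \<Sum>x\<in>V - {v}. avoid c V E u v a w * avoid c V E w v b x * P x y)"
      by (rule sum.swap)
    also have "\<dots> = (\<Sum>w\<in>V - {v}. avoid c V E u v a w * avoid c V E w v (Suc b) y)"
      using True by (simp add: sum_distrib_left mult.assoc)
    finally show ?thesis .
  next
    case False
    then show ?thesis by (cases "y \<in> V") auto
  qed
qed

lemma avoid_Suc_first_step:
  assumes u: "u \<in> V - {v}"
  shows "avoid c V E u v (Suc k) y = (\<Sum>w\<in>V - {v}. P u w * avoid c V E w v k y)"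
proof -
  have one: "avoid c V E u v 1 w = P u w" if "w \<in> V - {v}" for w
  proof -
    have "avoid c V E u v 1 w = (\<Sum>x\<in>V - {v}. (if x = u \<and> u \<noteq> v then 1 else 0) * P x w)"
      using that by simp
    also have "\<dots> = (\<Sum>x\<in>V - {v}. if x = u then P x w else 0)"
      by (rule sum.cong) auto
    also have "\<dots> = P u w" using u by (simp add: finite_V)
    finally show ?thesis .
  qed
  have "avoid c V E u v (Suc k) y = (\<Sum>w\<in>V - {v}. avoid c V E u v 1 w * avoid c V E w v k y)"
    using avoid_add[of u v 1 k y] u by simp
  also have "\<dots> = (\<Sum>w\<in>V - {v}. P u w * avoid c V E w v k y)"
    using one by (intro sum.cong) (auto simp del: avoid.simps)
  finally show ?thesis .
qed

definition survival :: "'a \<Rightarrow> 'a \<Rightarrow> nat \<Rightarrow> real" where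
  "survival u v k = (\<Sum>x\<in>V - {v}. avoid c V E u v k x)"

abbreviation first_hit :: "'a \<Rightarrow> 'a \<Rightarrow> nat \<Rightarrow> real" where
  "first_hit \<equiv> first_hit_prob c V E"

lemma first_hit_nonneg: "u \<in> V \<Longrightarrow> first_hit u v k \<ge> 0"
  unfolding first_hit_prob_def
  by (auto intro!: sum_nonneg mult_nonneg_nonneg P_nonneg avoid_nonneg)

lemma first_hit_0:
  assumes "u \<in> V - {v}" shows "first_hit u v 0 = P u v"
proof -
  have "first_hit u v 0 = (\<Sum>x\<in>V - {v}. if x = u then P x v else 0)"
    unfolding first_hit_prob_def by (intro sum.cong) auto
  also have "\<dots> = P u v" using assms finite_V by simp
  finally show ?thesis .
qed

lemma first_hit_Suc:
  assumes u: "u \<in> V - {v}"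
  shows "first_hit u v (Suc k) = (\<Sum>w\<in>V - {v}. P u w * first_hit w v k)"
proof -
  have "first_hit u v (Suc k) = (\<Sum>x\<in>V - {v}. \<Sum>w\<in>V - {v}. P u w * avoid c V E w v k x * P x v)"
    unfolding first_hit_prob_def
    by (intro sum.cong refl) (simp only: avoid_Suc_first_step[OF u] sum_distrib_right)
  also have "\<dots> = (\<Sum>w\<in>V - {v}. \<Sum>x\<in>V - {v}. P u w * avoid c V E w v k x * P x v)"
    by (rule sum.swap)
  also have "\<dots> = (\<Sum>w\<in>V - {v}. P u w * first_hit w v k)"
    by (simp add: first_hit_prob_def sum_distrib_left mult.assoc)
  finally show ?thesis .
qed

lemma survival_nonneg: "u \<in> V \<Longrightarrow> survival u v k \<ge> 0"
  unfolding survival_def by (auto intro!: sum_nonneg avoid_nonneg)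

lemma survival_0: "u \<in> V - {v} \<Longrightarrow> survival u v 0 = 1"
  unfolding survival_def using finite_V by (simp add: sum.delta')

lemma survival_Suc:
  assumes "u \<in> V" "v \<in> V"
  shows "survival u v (Suc k) = survival u v k - first_hit u v k"
proof -
  have "survival u v (Suc k) = (\<Sum>y\<in>V - {v}. \<Sum>x\<in>V - {v}. avoid c V E u v k x * P x y)"
    unfolding survival_def by (intro sum.cong) auto
  also have "\<dots> = (\<Sum>x\<in>V - {v}. \<Sum>y\<in>V - {v}. avoid c V E u v k x * P x y)"
    by (rule sum.swap)
  also have "\<dots> = (\<Sum>x\<in>V - {v}. avoid c V E u v k x * (1 - P x v))"
    using sum_P_remove[OF assms(2)] by (intro sum.cong) (auto simp: sum_distrib_left[symmetric])
  also have "\<dots> = survival u v k - first_hit u v k"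
    by (simp add: survival_def first_hit_prob_def right_diff_distrib sum_subtractf)
  finally show ?thesis .
qed

lemma first_hit_le_survival: "u \<in> V \<Longrightarrow> v \<in> V \<Longrightarrow> first_hit u v k \<le> survival u v k"
  using survival_Suc[of u v k] survival_nonneg[of u v "Suc k"] by simp

lemma survival_antimono:
  assumes "u \<in> V" "v \<in> V" "k \<le> k'"
  shows "survival u v k' \<le> survival u v k"
  using assms(3)
proof (induction k' rule: dec_induct)
  case (step n)
  then show ?case using survival_Suc[OF assms(1,2), of n] first_hit_nonneg[OF assms(1), of v n] by simp
qed simp

lemma survival_add:
  assumes "u \<in> V"
  shows "survival u v (a + b) = (\<Sum>w\<in>V - {v}. avoid c V E u v a w * survival w v b)"
proof -
  have "survival u v (a + b)
      = (\<Sum>x\<in>V - {v}. \<Sum>w\<in>V - {v}. avoid c V E u v a w * avoid c V E w v b x)"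
    unfolding survival_def using avoid_add[OF assms] by simp
  also have "\<dots> = (\<Sum>w\<in>V - {v}. \<Sum>x\<in>V - {v}. avoid c V E u v a w * avoid c V E w v b x)"
    by (rule sum.swap)
  finally show ?thesis by (simp add: survival_def sum_distrib_left)
qed

lemma sum_first_hit_lessThan:
  "u \<in> V - {v} \<Longrightarrow> v \<in> V \<Longrightarrow> (\<Sum>k<K. first_hit u v k) = 1 - survival u v K"
  by (induction K) (auto simp: survival_0 survival_Suc)

lemma first_hit_eventually_pos:
  assumes v: "v \<in> V" and u: "u \<in> V" "u \<noteq> v"
  shows "\<exists>k. first_hit u v k > 0"
proof -
  have "(u, v) \<in> {(a, b). {a, b} \<in> E}\<^sup>*" using connected u v by (simp add: connected_graph_def)
  then show ?thesis using u
  proof (induction rule: converse_rtrancl_induct)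
    case base then show ?case by simp
  next
    case (step y z)
    from step.hyps(1) have yz: "z \<in> nbrs E y" by (simp add: nbrs_def)
    then have zV: "z \<in> V" using nbrsD by auto
    show ?case
    proof (cases "z = v")
      case True
      then have "first_hit y v 0 > 0" using first_hit_0[of y v] step.prems P_pos[OF yz] by simp
      then show ?thesis by blast
    next
      case False
      then obtain k where k: "first_hit z v k > 0" using step.IH zV by blast
      have "0 < P y z * first_hit z v k" using P_pos[OF yz] k by simp
      also have "\<dots> \<le> (\<Sum>w\<in>V - {v}. P y w * first_hit w v k)"
        by (rule member_le_sum)
           (use zV False finite_V step.prems in \<open>auto intro!: mult_nonneg_nonneg P_nonneg first_hit_nonneg\<close>)
      finally have "first_hit y v (Suc k) > 0" using first_hit_Suc[of y v k] step.prems by simp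
      then show ?thesis by blast
    qed
  qed
qed

lemma survival_contracts:
  assumes v: "v \<in> V"
  shows "\<exists>N \<rho>. 0 < N \<and> 0 < \<rho> \<and> \<rho> < 1 \<and> (\<forall>u\<in>V - {v}. survival u v N \<le> \<rho>)"
proof -
  obtain kf where kf: "\<forall>u\<in>V - {v}. first_hit u v (kf u) > 0"
    using first_hit_eventually_pos v by (metis DiffE singletonI)
  define N where "N = Suc (Max (insert 0 (kf ` (V - {v}))))"
  have lt1: "survival u v N < 1" if u: "u \<in> V - {v}" for u
  proof -
    have "Suc (kf u) \<le> N" using u finite_V by (simp add: N_def)
    then have "survival u v N \<le> survival u v (Suc (kf u))" using survival_antimono u v by blast
    also have "\<dots> = 1 - (\<Sum>k<kf u. first_hit u v k) - first_hit u v (kf u)"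
      using sum_first_hit_lessThan[OF u v, of "Suc (kf u)"] by simp
    also have "\<dots> < 1"
      using kf u sum_nonneg[of "{..<kf u}" "first_hit u v"] first_hit_nonneg by force
    finally show ?thesis .
  qed
  define \<rho> where "\<rho> = Max (insert (1/2) ((\<lambda>u. survival u v N) ` (V - {v})))"
  have "\<rho> \<ge> 1/2" unfolding \<rho>_def using finite_V by (intro Max_ge) auto
  moreover have "\<forall>u\<in>V - {v}. survival u v N \<le> \<rho>"
    unfolding \<rho>_def using finite_V by (auto intro!: Max_ge)
  moreover have "\<rho> < 1" unfolding \<rho>_def using finite_V lt1 by (subst Max_less_iff) auto
  ultimately show ?thesis by (intro exI[of _ N] exI[of _ \<rho>]) (auto simp: N_def)
qed

lemma survival_mult_le_power:
  assumes v: "v \<in> V" and "0 \<le> \<rho>" and bound: "\<forall>u\<in>V - {v}. survival u v N \<le> \<rho>"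
  shows "u \<in> V - {v} \<Longrightarrow> survival u v (j * N) \<le> \<rho> ^ j"
proof (induction j arbitrary: u)
  case 0 then show ?case using survival_0 by simp
next
  case (Suc j)
  have "survival u v (Suc j * N) = (\<Sum>w\<in>V - {v}. avoid c V E u v (j * N) w * survival w v N)"
    using survival_add[of u v "j * N" N] Suc.prems by (simp add: add.commute)
  also have "\<dots> \<le> (\<Sum>w\<in>V - {v}. avoid c V E u v (j * N) w * \<rho>)"
    using Suc.prems bound by (intro sum_mono mult_left_mono avoid_nonneg) auto
  also have "\<dots> = \<rho> * survival u v (j * N)" by (simp add: survival_def sum_distrib_left mult.commute)
  also have "\<dots> \<le> \<rho> * \<rho> ^ j" using Suc assms(2) by (intro mult_left_mono) auto
  finally show ?case by simp
qed

lemma survival_geometric_decay: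
  assumes v: "v \<in> V"
  shows "\<exists>C \<sigma>. 0 < \<sigma> \<and> \<sigma> < 1 \<and> 0 \<le> C \<and> (\<forall>u\<in>V - {v}. \<forall>k. survival u v k \<le> C * \<sigma> ^ k)"
proof -
  obtain N \<rho> where N: "0 < N" "0 < \<rho>" "\<rho> < 1" "\<forall>u\<in>V - {v}. survival u v N \<le> \<rho>"
    using survival_contracts[OF v] by blast
  define \<sigma> where "\<sigma> = root N \<rho>"
  have \<sigma>: "0 < \<sigma>" "\<sigma> < 1" "\<sigma> ^ N = \<rho>" using N by (simp_all add: \<sigma>_def real_root_gt_zero)
  have "survival u v k \<le> (1 / \<rho>) * \<sigma> ^ k" if u: "u \<in> V - {v}" for u k
  proof -
    define q r where "q = k div N" and "r = k mod N"
    have k: "k = q * N + r" by (simp add: q_def r_def)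
    have "survival u v k \<le> survival u v (q * N)" using survival_antimono[of u v "q * N" k] u v k by simp
    also have "\<dots> \<le> \<rho> ^ q" using survival_mult_le_power[OF v _ N(4) u] N by simp
    also have "\<dots> \<le> (1 / \<rho>) * \<sigma> ^ k"
    proof -
      have "\<sigma> ^ N \<le> \<sigma> ^ r" using \<sigma> N by (intro power_decreasing) (auto simp: r_def less_imp_le)
      then have "\<rho> ^ q * \<rho> \<le> \<rho> ^ q * \<sigma> ^ r" using \<sigma> N by (intro mult_left_mono) auto
      also have "\<rho> ^ q * \<sigma> ^ r = \<sigma> ^ k" using \<sigma> by (simp add: k power_add power_mult mult.commute)
      finally show ?thesis using N by (simp add: field_simps)
    qed
    finally show ?thesis .
  qed
  then show ?thesis using \<sigma> N by (intro exI[of _ "1 / \<rho>"] exI[of _ \<sigma>]) auto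
qed

lemma first_hit_summable:
  assumes v: "v \<in> V" and u: "u \<in> V - {v}"
  shows "summable (\<lambda>k. real (Suc k) * first_hit u v k)" and "first_hit u v sums 1"
proof -
  obtain C \<sigma> where C: "0 < \<sigma>" "\<sigma> < 1" "0 \<le> C" "\<forall>u\<in>V - {v}. \<forall>k. survival u v k \<le> C * \<sigma> ^ k"
    using survival_geometric_decay[OF v] by blast
  have nonneg: "first_hit u v k \<ge> 0" for k using first_hit_nonneg u by simp
  have bound: "first_hit u v k \<le> C * \<sigma> ^ k" for k
  proof -
    have "first_hit u v k \<le> survival u v k" using first_hit_le_survival[of u v k] u v by simp
    also have "\<dots> \<le> C * \<sigma> ^ k" using C(4) u by blast
    finally show ?thesis .
  qed
  show "summable (\<lambda>k. real (Suc k) * first_hit u v k)"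
  proof (rule summable_comparison_test')
    show "summable (\<lambda>k. C * (real (Suc k) * \<sigma> ^ k))"
      using summable_Suc_times_power[of \<sigma>] C by (intro summable_mult) auto
    show "norm (real (Suc k) * first_hit u v k) \<le> C * (real (Suc k) * \<sigma> ^ k)" for k
      using bound[of k] nonneg[of k] by (simp add: abs_mult mult_left_mono)
  qed
  have "(\<lambda>K. survival u v K) \<longlonglongrightarrow> 0"
  proof (rule tendsto_sandwich[of "\<lambda>_. 0" _ _ "\<lambda>K. C * \<sigma> ^ K"])
    show "\<forall>\<^sub>F n in sequentially. 0 \<le> survival u v n" using survival_nonneg u by auto
    show "\<forall>\<^sub>F n in sequentially. survival u v n \<le> C * \<sigma> ^ n" using C u by auto
    show "(\<lambda>n. C * \<sigma> ^ n) \<longlonglongrightarrow> 0" using C by (intro tendsto_mult_right_zero LIMSEQ_power_zero) auto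
  qed simp
  then have "(\<lambda>K. 1 - survival u v K) \<longlonglongrightarrow> 1 - 0" by (intro tendsto_diff) auto
  then show "first_hit u v sums 1" unfolding sums_def using sum_first_hit_lessThan[OF u v] by simp
qed

abbreviation H :: "'a \<Rightarrow> 'a \<Rightarrow> real" where "H \<equiv> hit_time c V E"

lemma H_nonneg:
  assumes "u \<in> V" "v \<in> V" shows "H u v \<ge> 0"
proof (cases "u = v")
  case False
  then show ?thesis unfolding hit_time_def using first_hit_summable(1)[of v u] assms
    by (intro suminf_nonneg) (auto intro!: mult_nonneg_nonneg first_hit_nonneg)
qed (simp add: hit_time_self)

lemma H_first_step:
  assumes v: "v \<in> V" and u: "u \<in> V" "u \<noteq> v"
  shows "H u v = 1 + (\<Sum>w\<in>V. P u w * H w v)"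
proof -
  have uv: "u \<in> V - {v}" using u by simp
  define g where "g k = real (Suc k) * first_hit u v k" for k
  define f where "f w k = P u w * (real (Suc k) * first_hit w v k + first_hit w v k)" for w k
  have f_sums: "f w sums (P u w * (H w v + 1))" if w: "w \<in> V - {v}" for w
  proof -
    note s = first_hit_summable[OF v w]
    have "(\<lambda>k. real (Suc k) * first_hit w v k + first_hit w v k) sums (H w v + 1)"
      unfolding hit_time_def using summable_sums[OF s(1)] s(2) by (rule sums_add)
    then show ?thesis unfolding f_def by (rule sums_mult)
  qed
  have "H u v = g 0 + (\<Sum>k. g (Suc k))"
    using suminf_split_head[of g] first_hit_summable(1)[OF v uv] by (simp add: hit_time_def g_def[abs_def])
  also have "g 0 = P u v" using first_hit_0[OF uv] by (simp add: g_def)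
  also have "g (Suc k) = (\<Sum>w\<in>V - {v}. f w k)" for k
    unfolding g_def f_def first_hit_Suc[OF uv] sum_distrib_left by (intro sum.cong refl) (simp add: algebra_simps)
  then have "(\<Sum>k. g (Suc k)) = (\<Sum>k. \<Sum>w\<in>V - {v}. f w k)" by simp
  also have "\<dots> = (\<Sum>w\<in>V - {v}. P u w * (H w v + 1))"
    using f_sums by (intro sums_unique[symmetric] sums_sum) auto
  finally have "H u v = P u v + (\<Sum>w\<in>V - {v}. P u w) + (\<Sum>w\<in>V - {v}. P u w * H w v)"
    by (simp add: distrib_left sum.distrib)
  also have "(\<Sum>w\<in>V - {v}. P u w * H w v) = (\<Sum>w\<in>V. P u w * H w v)"
    using v finite_V by (simp add: sum.remove hit_time_self)
  finally show ?thesis using sum_P_remove[OF v u(1)] by simp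
qed

section \<open>The Laplacian and the commute time identity\<close>

definition laplacian :: "('a \<Rightarrow> real) \<Rightarrow> 'a \<Rightarrow> real" where
  "laplacian g x = (\<Sum>y\<in>nbrs E x. c x y * (g x - g y))"

lemma laplacian_affine:
  "laplacian (\<lambda>x. \<alpha> * f x + \<beta> * g x + k) w = \<alpha> * laplacian f w + \<beta> * laplacian g w"
  by (simp add: laplacian_def sum.distrib[symmetric] sum_distrib_left algebra_simps)

lemma sum_laplacian_eq_0: "(\<Sum>x\<in>V. laplacian g x) = 0"
proof -
  have "(\<Sum>x\<in>V. laplacian g x) = (\<Sum>x\<in>V. \<Sum>y\<in>nbrs E x. c y x * (g y - g x))"
    unfolding laplacian_def by (rule sum_nbrs_swap)
  also have "\<dots> = - (\<Sum>x\<in>V. laplacian g x)"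
    unfolding laplacian_def by (simp add: sum_negf[symmetric] cond_sym algebra_simps)
  finally show ?thesis by simp
qed

lemma laplacian_H:
  assumes v: "v \<in> V" and u: "u \<in> V" "u \<noteq> v"
  shows "laplacian (\<lambda>x. H x v) u = cond_sum u"
proof -
  have "(\<Sum>w\<in>V. P u w * H w v) = (\<Sum>y\<in>nbrs E u. c u y / cond_sum u * H y v)"
    unfolding sum_P_times_eq_sum_nbrs by (intro sum.cong refl) (simp add: P_eq)
  also have "\<dots> = (\<Sum>y\<in>nbrs E u. c u y * H y v) / cond_sum u"
    by (simp add: sum_divide_distrib)
  finally have "cond_sum u * H u v = cond_sum u + (\<Sum>y\<in>nbrs E u. c u y * H y v)"
    using H_first_step[OF v u] cond_sum_pos[OF u(1)] by (simp add: field_simps)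
  then show ?thesis
    by (simp add: laplacian_def cond_sum_def right_diff_distrib sum_subtractf sum_distrib_right)
qed

lemma laplacian_H_target:
  assumes v: "v \<in> V" shows "laplacian (\<lambda>x. H x v) v = cond_sum v - cond_total"
proof -
  have "0 = laplacian (\<lambda>x. H x v) v + (\<Sum>x\<in>V - {v}. laplacian (\<lambda>x. H x v) x)"
    using sum_laplacian_eq_0 v finite_V by (simp add: sum.remove)
  also have "(\<Sum>x\<in>V - {v}. laplacian (\<lambda>x. H x v) x) = (\<Sum>x\<in>V - {v}. cond_sum x)"
    using laplacian_H v by (intro sum.cong) auto
  also have "\<dots> = cond_total - cond_sum v" unfolding cond_total_def using v finite_V by (simp add: sum_diff1)
  finally show ?thesis by simp
qed

text \<open>A minimum attained outside \<open>B\<close> is attained at all neighbours as well, so it propagates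
  along a path into \<open>B\<close>.\<close>
lemma minimum_principle:
  assumes b0: "b0 \<in> B" and BV: "B \<subseteq> V" and super: "\<forall>x\<in>V - B. laplacian f x \<ge> 0" and x: "x \<in> V"
  shows "\<exists>b\<in>B. f b \<le> f x"
proof -
  define m where "m = Min (f ` V)"
  have m_le: "\<forall>y\<in>V. m \<le> f y" unfolding m_def using finite_V by auto
  have "m \<in> f ` V" unfolding m_def using finite_V x by (intro Min_in) auto
  then obtain z where z: "z \<in> V" "f z = m" by auto
  have "(z, b0) \<in> {(a, b). {a, b} \<in> E}\<^sup>*" using connected z b0 BV by (auto simp: connected_graph_def)
  then have "\<exists>b\<in>B. f b = m" using z
  proof (induction rule: converse_rtrancl_induct)
    case base then show ?case using b0 by blast
  next
    case (step y y')
    show ?case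
    proof (cases "y \<in> B")
      case False
      have yy': "y' \<in> nbrs E y" using step.hyps(1) by (simp add: nbrs_def)
      have terms_nonneg: "\<forall>w\<in>nbrs E y. c y w * (f w - f y) \<ge> 0"
      proof
        fix w assume w: "w \<in> nbrs E y"
        have "f w - f y \<ge> 0" using m_le step.prems nbrsD[OF w] by auto
        then show "c y w * (f w - f y) \<ge> 0" using cond_pos[OF w] by simp
      qed
      have "(\<Sum>w\<in>nbrs E y. c y w * (f w - f y)) = - laplacian f y"
        by (simp add: laplacian_def sum_negf[symmetric] algebra_simps)
      also have "\<dots> \<le> 0" using super False step.prems by auto
      finally have "(\<Sum>w\<in>nbrs E y. c y w * (f w - f y)) = 0"
        using sum_nonneg[of "nbrs E y" "\<lambda>w. c y w * (f w - f y)"] terms_nonneg by simp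
      then have "\<forall>w\<in>nbrs E y. c y w * (f w - f y) = 0"
        using sum_nonneg_eq_0_iff[OF finite_nbrs, where f="\<lambda>w. c y w * (f w - f y)"] terms_nonneg by simp
      then have "f y' = f y" using yy' cond_pos[OF yy'] by auto
      then show ?thesis using step.IH step.prems yy' nbrsD by auto
    qed (use step.prems in blast)
  qed
  then show ?thesis using m_le x by force
qed

lemma potential_unique:
  assumes "is_potential c V E u v \<phi>" "is_potential c V E u v \<psi>" "v \<in> V" "x \<in> V"
  shows "\<phi> x = \<psi> x"
proof -
  have harmonic: "laplacian (\<lambda>y. \<alpha> * \<phi> y + (- \<alpha>) * \<psi> y + 0) w = 0" if "w \<in> V" for w \<alpha>
    using assms that unfolding laplacian_affine by (simp add: is_potential_def laplacian_def)
  have "\<exists>b\<in>{v}. \<alpha> * \<phi> b + (- \<alpha>) * \<psi> b + 0 \<le> \<alpha> * \<phi> x + (- \<alpha>) * \<psi> x + 0" for \<alpha>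
    by (rule minimum_principle) (use assms harmonic in auto)
  from this[of 1] this[of "-1"] show ?thesis using assms by (auto simp: is_potential_def)
qed

lemma eff_res_eq_commute_time:
  assumes "u \<in> V" "v \<in> V" "u \<noteq> v"
  shows "eff_res c V E u v = (H u v + H v u) / cond_total"
proof -
  define \<phi> where "\<phi> x = (1 / cond_total) * H x v + (- 1 / cond_total) * H x u + H v u / cond_total" for x
  have D: "cond_total > 0" using cond_total_pos assms by auto
  have pot: "is_potential c V E u v \<phi>"
    unfolding is_potential_def
  proof (intro conjI ballI)
    show "\<phi> v = 0" by (simp add: \<phi>_def hit_time_self)
    fix w assume w: "w \<in> V"
    have "(\<Sum>x\<in>nbrs E w. c w x * (\<phi> w - \<phi> x)) = laplacian \<phi> w" by (simp add: laplacian_def)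
    also have "\<dots> = (1 / cond_total) * laplacian (\<lambda>x. H x v) w + (- 1 / cond_total) * laplacian (\<lambda>x. H x u) w"
      unfolding \<phi>_def[abs_def] by (rule laplacian_affine)
    also have "\<dots> = (if w = u then 1 else 0) - (if w = v then 1 else 0)"
      using laplacian_H laplacian_H_target assms w D by (auto simp: field_simps)
    finally show "(\<Sum>x\<in>nbrs E w. c w x * (\<phi> w - \<phi> x)) = (if w = u then 1 else 0) - (if w = v then 1 else 0)" .
  qed
  have "eff_res c V E u v = \<phi> u"
    unfolding eff_res_def by (rule the_equality) (use pot potential_unique assms in blast)+
  also have "\<dots> = (H u v + H v u) / cond_total" by (simp add: \<phi>_def hit_time_self add_divide_distrib)
  finally show ?thesis .
qed

lemma edge_res_eq_commute_time:
  assumes "a \<in> V" "b \<in> V" "a \<noteq> b"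
  shows "edge_res c V E {a, b} = (H a b + H b a) / cond_total"
proof -
  define p where "p = (SOME p. {a, b} = {fst p, snd p})"
  have "{a, b} = {fst p, snd p}" unfolding p_def by (rule someI[of _ "(a, b)"]) simp
  then have "p = (a, b) \<or> p = (b, a)" by (auto simp: doubleton_eq_iff prod_eq_iff)
  then show ?thesis
    using eff_res_eq_commute_time[of a b] eff_res_eq_commute_time[of b a] assms
    by (auto simp: edge_res_def p_def[symmetric] add.commute)
qed

text \<open>\<open>H[\<cdot>,y] - H[\<cdot>,z]\<close> is harmonic off \<open>{y, z}\<close> and is \<open>\<ge> -H[y,z]\<close> on \<open>{y, z}\<close>.\<close>
lemma H_triangle:
  assumes "x \<in> V" "y \<in> V" "z \<in> V" shows "H x z \<le> H x y + H y z"
proof (cases "y = z")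
  case False
  define f where "f w = 1 * H w y + (- 1) * H w z + H y z" for w
  have "\<exists>b\<in>{y, z}. f b \<le> f x"
  proof (rule minimum_principle)
    show "\<forall>w\<in>V - {y, z}. laplacian f w \<ge> 0"
      unfolding f_def laplacian_affine using laplacian_H assms by auto
  qed (use assms in auto)
  moreover have "f y = 0" "f z \<ge> 0" using H_nonneg assms by (simp_all add: f_def hit_time_self)
  ultimately have "f x \<ge> 0" by auto
  then show ?thesis by (simp add: f_def)
qed (simp add: hit_time_self)

end

section \<open>Cyclic tours\<close>

fun path_cost :: "('a \<Rightarrow> 'a \<Rightarrow> real) \<Rightarrow> 'a list \<Rightarrow> real" where
  "path_cost h (a # b # r) = h a b + path_cost h (b # r)"
| "path_cost h _ = 0"

definition cycle_cost :: "('a \<Rightarrow> 'a \<Rightarrow> real) \<Rightarrow> 'a list \<Rightarrow> real" where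
  "cycle_cost h xs = path_cost h xs + h (last xs) (hd xs)"

lemma path_cost_append:
  "xs \<noteq> [] \<Longrightarrow> ys \<noteq> [] \<Longrightarrow> path_cost h (xs @ ys) = path_cost h xs + h (last xs) (hd ys) + path_cost h ys"
proof (induction xs)
  case (Cons a xs)
  then show ?case by (cases xs; cases ys) auto
qed simp

lemma cycle_cost_rotate: "xs \<noteq> [] \<Longrightarrow> ys \<noteq> [] \<Longrightarrow> cycle_cost h (xs @ ys) = cycle_cost h (ys @ xs)"
  by (simp add: cycle_cost_def path_cost_append)

lemma path_cost_conv_sum: "path_cost h xs = (\<Sum>i<length xs - 1. h (xs ! i) (xs ! Suc i))"
proof (induction h xs rule: path_cost.induct)
  case (1 h a b r)
  then show ?case by (simp add: sum.lessThan_Suc_shift del: sum.lessThan_Suc)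
qed auto

lemma sum_cyclic_eq_cycle_cost:
  assumes "xs \<noteq> []"
  shows "(\<Sum>i<length xs. h (xs ! i) (xs ! ((i + 1) mod length xs))) = cycle_cost h xs"
proof -
  obtain m where m: "length xs = Suc m" using assms by (cases xs) auto
  have "(\<Sum>i<length xs. h (xs ! i) (xs ! ((i + 1) mod length xs)))
      = (\<Sum>i<m. h (xs ! i) (xs ! Suc i)) + h (xs ! m) (xs ! 0)"
    by (simp add: m)
  also have "\<dots> = cycle_cost h xs"
    using assms m by (simp add: cycle_cost_def path_cost_conv_sum last_conv_nth hd_conv_nth)
  finally show ?thesis .
qed

text \<open>Insert \<open>l\<close> right after \<open>p\<close>, turning the step \<open>p \<rightarrow> y\<close> into \<open>p \<rightarrow> l \<rightarrow> y\<close>.\<close>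
lemma cycle_cost_insert:
  assumes "distinct xs" "p \<in> set xs" "l \<notin> set xs"
    and triangle: "\<forall>y\<in>set xs. h l y \<le> h l p + h p y"
  shows "\<exists>ys. distinct ys \<and> set ys = insert l (set xs) \<and> cycle_cost h ys \<le> cycle_cost h xs + (h p l + h l p)"
proof -
  obtain as bs where xs: "xs = as @ p # bs" using split_list assms(2) by metis
  define zs where "zs = bs @ as @ [p]"
  have zs: "zs \<noteq> []" "last zs = p" "set zs = set xs" "distinct zs"
    using assms(1) by (auto simp: zs_def xs)
  have "cycle_cost h zs = cycle_cost h xs"
    using cycle_cost_rotate[of "as @ [p]" bs h] by (cases "bs = []") (auto simp: zs_def xs)
  have "cycle_cost h (zs @ [l]) = path_cost h zs + h p l + h l (hd zs)"
    using path_cost_append[of zs "[l]" h] zs by (simp add: cycle_cost_def)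
  also have "\<dots> \<le> path_cost h zs + h p l + (h l p + h p (hd zs))"
    using triangle hd_in_set[OF zs(1)] zs(3) by fastforce
  also have "\<dots> = cycle_cost h xs + (h p l + h l p)"
    using \<open>cycle_cost h zs = cycle_cost h xs\<close> zs(2) by (simp add: cycle_cost_def)
  finally show ?thesis
    using zs assms(3) by (intro exI[of _ "zs @ [l]"]) auto
qed

lemma rtrancl_crosses_boundary:
  "(a, b) \<in> R\<^sup>* \<Longrightarrow> a \<in> S \<Longrightarrow> b \<notin> S \<Longrightarrow> \<exists>x y. (x, y) \<in> R \<and> x \<in> S \<and> y \<notin> S"
  by (induction rule: rtrancl_induct) auto

text \<open>Growing a tour one edge of \<open>T\<close> at a time: an edge \<open>{p, l}\<close> leaving the covered set
  costs at most \<open>w {p, l}\<close>.\<close>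
lemma tour_along_connected_subgraph:
  fixes h :: "'a \<Rightarrow> 'a \<Rightarrow> real" and w :: "'a set \<Rightarrow> real"
  assumes finV: "finite V" and v0: "v0 \<in> V" and conn: "connected_graph V T"
    and finT: "finite T" and T_in_V: "\<forall>e\<in>T. e \<subseteq> V"
    and triangle: "\<forall>x\<in>V. \<forall>y\<in>V. \<forall>z\<in>V. h x z \<le> h x y + h y z"
    and self: "\<forall>x\<in>V. h x x = 0"
    and w_nonneg: "\<forall>e\<in>T. w e \<ge> 0"
    and w_edge: "\<forall>p l. {p, l} \<in> T \<longrightarrow> h p l + h l p \<le> w {p, l}"
  shows "\<exists>xs. distinct xs \<and> set xs = V \<and> cycle_cost h xs \<le> (\<Sum>e\<in>T. w e)"
proof -
  have partial: "m \<le> card V \<Longrightarrow> \<exists>xs. distinct xs \<and> set xs \<subseteq> V \<and> length xs = m \<and>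
      cycle_cost h xs \<le> (\<Sum>e\<in>{e\<in>T. e \<subseteq> set xs}. w e)"
    if "1 \<le> m" for m
    using that
  proof (induction m rule: dec_induct)
    case base
    have "cycle_cost h [v0] \<le> (\<Sum>e\<in>{e\<in>T. e \<subseteq> {v0}}. w e)"
      using self v0 w_nonneg by (auto simp: cycle_cost_def intro: sum_nonneg)
    then show ?case using v0 by (intro exI[of _ "[v0]"]) auto
  next
    case (step m)
    then obtain xs where xs: "distinct xs" "set xs \<subseteq> V" "length xs = m"
      "cycle_cost h xs \<le> (\<Sum>e\<in>{e\<in>T. e \<subseteq> set xs}. w e)" by auto
    have "card (set xs) < card V" using xs step.prems by (simp add: distinct_card)
    then have "\<not> V \<subseteq> set xs" using card_mono[OF List.finite_set[of xs], of V] by linarith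
    then obtain z where z: "z \<in> V" "z \<notin> set xs" by blast
    obtain s where s: "s \<in> set xs" using xs(3) step.hyps by (cases xs) auto
    have "(s, z) \<in> {(x, y). {x, y} \<in> T}\<^sup>*" using conn xs(2) s z by (auto simp: connected_graph_def)
    from rtrancl_crosses_boundary[OF this s z(2)] obtain p l
      where pl: "{p, l} \<in> T" "p \<in> set xs" "l \<notin> set xs" by blast
    have "l \<in> V" using T_in_V pl(1) by blast
    then obtain ys where ys: "distinct ys" "set ys = insert l (set xs)"
      "cycle_cost h ys \<le> cycle_cost h xs + (h p l + h l p)"
      using cycle_cost_insert[OF xs(1) pl(2,3), of h] triangle xs(2) pl(2) by blast
    have "cycle_cost h ys \<le> (\<Sum>e\<in>{e\<in>T. e \<subseteq> set xs}. w e) + w {p, l}"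
      using ys(3) xs(4) w_edge pl(1) by fastforce
    also have "\<dots> = (\<Sum>e\<in>insert {p, l} {e\<in>T. e \<subseteq> set xs}. w e)"
      using pl finT by (subst sum.insert) auto
    also have "\<dots> \<le> (\<Sum>e\<in>{e\<in>T. e \<subseteq> set ys}. w e)"
      using pl finT w_nonneg ys(2) by (intro sum_mono2) auto
    finally show ?case
      using ys xs pl(3) \<open>l \<in> V\<close> by (intro exI[of _ ys]) (auto simp: distinct_card[symmetric])
  qed
  have "1 \<le> card V" using v0 finV by (metis card_0_eq empty_iff less_one not_le)
  from partial[OF this order.refl] obtain xs where xs: "distinct xs" "set xs \<subseteq> V"
    "length xs = card V" "cycle_cost h xs \<le> (\<Sum>e\<in>{e\<in>T. e \<subseteq> set xs}. w e)" by blast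
  have "set xs = V" using xs finV by (metis card_subset_eq distinct_card)
  moreover have "{e\<in>T. e \<subseteq> V} = T" using T_in_V by blast
  ultimately show ?thesis using xs by auto
qed

section \<open>Cyclic cover time and the minimum degree conductance\<close>

lemma CYC_le_cyc_sum:
  assumes "finite V" "distinct xs" "set xs = V"
  shows "CYC c V E \<le> cyc_sum c V E xs"
proof -
  have "finite {xs. distinct xs \<and> set xs = V}"
    by (rule finite_subset[OF _ finite_subset_distinct[OF assms(1)]]) auto
  then show ?thesis
    unfolding CYC_def using assms(2,3) by (intro Min_le) (auto simp: setcompr_eq_image)
qed

lemma CYC_le_0_if_card_le_1:
  assumes "finite V" "card V \<le> 1"
  shows "CYC c V E \<le> 0"
proof -
  obtain xs where xs: "set xs = V" "distinct xs" using finite_distinct_list[OF assms(1)] by blast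
  then have "length xs \<le> 1" using assms(2) distinct_card[OF xs(2)] by simp
  then have "cyc_sum c V E xs = 0"
    by (cases xs) (auto simp: cyc_sum_def hit_time_self)
  then show ?thesis using CYC_le_cyc_sum[OF assms(1) xs(2,1), where c=c and E=E] by simp
qed

lemma exists_inj_rank_refining:
  fixes d :: "'a \<Rightarrow> nat"
  assumes "finite V"
  obtains r :: "'a \<Rightarrow> nat" where "inj_on r V" "\<And>x y. x \<in> V \<Longrightarrow> y \<in> V \<Longrightarrow> r x < r y \<Longrightarrow> d x \<le> d y"
proof -
  obtain f :: "'a \<Rightarrow> nat" and n where f: "f ` V = {..<n}" "inj_on f V"
    using finite_imp_inj_to_nat_seg[OF assms] by blast
  have f_less: "x \<in> V \<Longrightarrow> f x < n" for x using f(1) by blast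
  define r where "r x = d x * n + f x" for x
  have "inj_on r V"
  proof (rule inj_onI)
    fix x y assume "x \<in> V" "y \<in> V" "r x = r y"
    then have "r x mod n = r y mod n" by simp
    then have "f x = f y" using f_less \<open>x \<in> V\<close> \<open>y \<in> V\<close> by (simp add: r_def)
    then show "x = y" using f(2) \<open>x \<in> V\<close> \<open>y \<in> V\<close> by (meson inj_onD)
  qed
  moreover have "d x \<le> d y" if "x \<in> V" "y \<in> V" "r x < r y" for x y
  proof (rule ccontr)
    assume "\<not> d x \<le> d y"
    then have "Suc (d y) * n \<le> d x * n" by (intro mult_le_mono1) simp
    then have "r y < r x" using f_less[OF that(2)] by (simp add: r_def)
    then show False using that by simp
  qed
  ultimately show ?thesis using that by blast
qed

context conductance_walk
begin

lemma edge_res_nonneg: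
  assumes "e \<in> E" shows "edge_res c V E e \<ge> 0"
proof -
  obtain a b where ab: "a \<in> V" "b \<in> V" "a \<noteq> b" "e = {a, b}" using edge_in_V[OF assms] by blast
  then show ?thesis
    using edge_res_eq_commute_time[OF ab(1-3)] H_nonneg ab cond_total_pos
    by (auto intro!: divide_nonneg_pos add_nonneg_nonneg)
qed

lemma CYC_le_cond_total_times_tree_res:
  assumes TE: "T \<subseteq> E" and conn_T: "connected_graph V T" and ne: "V \<noteq> {}"
  shows "CYC c V E \<le> cond_total * (\<Sum>e\<in>T. edge_res c V E e)"
proof -
  obtain v0 where v0: "v0 \<in> V" using ne by blast
  have finE: "finite E"
    by (rule finite_subset[of _ "Pow V"]) (use edge_in_V finite_V in auto)
  have "\<exists>xs. distinct xs \<and> set xs = V \<and> cycle_cost H xs \<le> (\<Sum>e\<in>T. cond_total * edge_res c V E e)"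
  proof (rule tour_along_connected_subgraph[OF finite_V v0 conn_T])
    show "finite T" using finE TE finite_subset by blast
    show "\<forall>e\<in>T. e \<subseteq> V" using TE edge_in_V by blast
    show "\<forall>x\<in>V. \<forall>y\<in>V. \<forall>z\<in>V. H x z \<le> H x y + H y z" using H_triangle by blast
    show "\<forall>x\<in>V. H x x = 0" by (simp add: hit_time_self)
    show "\<forall>e\<in>T. cond_total * edge_res c V E e \<ge> 0"
      using TE edge_res_nonneg cond_total_pos ne by (auto intro: mult_nonneg_nonneg less_imp_le)
    show "\<forall>p l. {p, l} \<in> T \<longrightarrow> H p l + H l p \<le> cond_total * edge_res c V E {p, l}"
    proof (intro allI impI)
      fix p l assume "{p, l} \<in> T"
      then have "l \<in> nbrs E p" using TE by (auto simp: nbrs_def)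
      then show "H p l + H l p \<le> cond_total * edge_res c V E {p, l}"
        using edge_res_eq_commute_time[of p l] nbrsD cond_total_pos ne by simp
    qed
  qed
  then obtain xs where xs: "distinct xs" "set xs = V"
    "cycle_cost H xs \<le> (\<Sum>e\<in>T. cond_total * edge_res c V E e)" by blast
  have "CYC c V E \<le> cyc_sum c V E xs" using CYC_le_cyc_sum[OF finite_V xs(1,2)] .
  also have "\<dots> = cycle_cost H xs"
    unfolding cyc_sum_def using sum_cyclic_eq_cycle_cost[of xs H] xs(2) ne by auto
  finally show ?thesis using xs(3) by (simp add: sum_distrib_left)
qed

text \<open>Each edge is counted in \<open>cond_total\<close> once from each of its endpoints.\<close>
lemma cond_total_eq_twice_upward:
  fixes r :: "'a \<Rightarrow> 'b::linorder"
  assumes "inj_on r V"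
  shows "cond_total = 2 * (\<Sum>x\<in>V. \<Sum>y\<in>nbrs E x. if r x < r y then c x y else 0)"
proof -
  define up where "up x y = (if r x < r y then c x y else 0)" for x y
  have "c x y = up x y + up y x" if "x \<in> V" "y \<in> nbrs E x" for x y
  proof -
    have "r x \<noteq> r y" using nbrsD[OF that(2)] inj_onD[OF assms, of x y] by blast
    then show ?thesis using cond_sym[of x y] by (auto simp: up_def)
  qed
  then have "cond_total = (\<Sum>x\<in>V. \<Sum>y\<in>nbrs E x. up x y) + (\<Sum>x\<in>V. \<Sum>y\<in>nbrs E x. up y x)"
    unfolding cond_total_def cond_sum_def by (simp add: sum.distrib[symmetric] cong: sum.cong)
  also have "(\<Sum>x\<in>V. \<Sum>y\<in>nbrs E x. up y x) = (\<Sum>x\<in>V. \<Sum>y\<in>nbrs E x. up x y)"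
    by (rule sum_nbrs_swap[symmetric])
  finally show ?thesis by (simp add: up_def)
qed

lemma cond_total_mindeg_le:
  assumes c_def: "c = mindeg_cond E" and ne: "V \<noteq> {}"
  shows "cond_total \<le> 2 * (real (card V) - 1)"
proof -
  obtain r :: "'a \<Rightarrow> nat" where r: "inj_on r V" "\<And>x y. x \<in> V \<Longrightarrow> y \<in> V \<Longrightarrow> r x < r y \<Longrightarrow> deg E x \<le> deg E y"
    using exists_inj_rank_refining[OF finite_V] by blast
  define up where "up x = (\<Sum>y\<in>nbrs E x. if r x < r y then c x y else 0)" for x
  have up_le_1: "up x \<le> 1" if x: "x \<in> V" for x
  proof -
    have "(if r x < r y then c x y else 0) \<le> 1 / real (deg E x)" if y: "y \<in> nbrs E x" for y
      using r(2)[OF x, of y] nbrsD[OF y] by (auto simp: c_def mindeg_cond_def min_def)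
    then have "up x \<le> (\<Sum>y\<in>nbrs E x. 1 / real (deg E x))" unfolding up_def by (rule sum_mono)
    also have "\<dots> \<le> 1" by (simp add: deg_def)
    finally show ?thesis .
  qed
  have "Max (r ` V) \<in> r ` V" using finite_V ne by (intro Max_in) auto
  then obtain m where m: "m \<in> V" "r m = Max (r ` V)" by auto
  have "r x \<le> r m" if "x \<in> V" for x using m(2) finite_V that by simp
  then have "up m = 0" unfolding up_def using nbrsD by (intro sum.neutral) (fastforce simp: not_less)
  then have "(\<Sum>x\<in>V. up x) = (\<Sum>x\<in>V - {m}. up x)" using m(1) finite_V by (simp add: sum.remove)
  also have "\<dots> \<le> real (card (V - {m}))" using sum_bounded_above[of "V - {m}" up 1] up_le_1 by simp
  also have "\<dots> = real (card V) - 1" using m(1) finite_V card_gt_0_iff[of V] by (auto simp: of_nat_diff)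
  finally show ?thesis using cond_total_eq_twice_upward[OF r(1)] by (simp add: up_def)
qed

end

lemma conductance_walk_mindeg:
  assumes "simple_graph V E" "connected_graph V E" "2 \<le> card V"
  shows "conductance_walk V E (mindeg_cond E)"
proof -
  have finV: "finite V" and edges: "\<And>e. e \<in> E \<Longrightarrow> \<exists>u v. u \<in> V \<and> v \<in> V \<and> u \<noteq> v \<and> e = {u, v}"
    using assms(1) by (auto simp: simple_graph_def)
  have deg_pos: "deg E x > 0" if "y \<in> nbrs E x" for x y
  proof -
    have "nbrs E x \<subseteq> V"
      using edges by (force simp: nbrs_def doubleton_eq_iff)
    then show ?thesis using that finV unfolding deg_def by (metis card_gt_0_iff empty_iff finite_subset)
  qed
  show ?thesis
  proof
    show "0 < mindeg_cond E x y" if "y \<in> nbrs E x" for x y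
      using deg_pos[OF that] deg_pos[of x y] that by (simp add: mindeg_cond_def nbrs_def insert_commute)
    show "\<exists>y\<in>V. y \<noteq> x" if "x \<in> V" for x
    proof (rule ccontr)
      assume "\<not> (\<exists>y\<in>V. y \<noteq> x)"
      then have "card V \<le> card {x}" by (intro card_mono) auto
      then show False using assms(3) by simp
    qed
  qed (use finV edges assms(2) in \<open>auto simp: mindeg_cond_def min.commute\<close>)
qed

lemma simple_graph_no_edges:
  assumes "simple_graph V E" "card V \<le> 1" shows "E = {}"
proof -
  have "card {u, v} \<le> card V" if "u \<in> V" "v \<in> V" for u v
    using assms(1) that by (intro card_mono) (auto simp: simple_graph_def)
  then show ?thesis using assms by (fastforce simp: simple_graph_def)
qed

theorem corollary1:
  fixes V :: "'a set" and E T :: "'a set set"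
  assumes "simple_graph V E" and "connected_graph V E"
    and "spanning_tree V E T"
  shows "CYC (mindeg_cond E) V E
           \<le> 2 * (real (card V) - 1) * (\<Sum>e\<in>T. edge_res (mindeg_cond E) V E e)"
proof (cases "2 \<le> card V")
  case True
  interpret conductance_walk V E "mindeg_cond E"
    using conductance_walk_mindeg assms(1,2) True .
  have T: "T \<subseteq> E" "connected_graph V T" using assms(3) by (auto simp: spanning_tree_def)
  have ne: "V \<noteq> {}" using True by auto
  have "CYC (mindeg_cond E) V E \<le> cond_total * (\<Sum>e\<in>T. edge_res (mindeg_cond E) V E e)"
    using CYC_le_cond_total_times_tree_res[OF T ne] .
  also have "\<dots> \<le> 2 * (real (card V) - 1) * (\<Sum>e\<in>T. edge_res (mindeg_cond E) V E e)"
    using cond_total_mindeg_le[OF refl ne] T(1) edge_res_nonneg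
    by (intro mult_right_mono sum_nonneg) auto
  finally show ?thesis .
next
  case False
  then have "E = {}" using simple_graph_no_edges[OF assms(1)] by simp
  then have "T = {}" using assms(3) by (simp add: spanning_tree_def)
  moreover have "CYC (mindeg_cond E) V E \<le> 0"
    using assms(1) False by (intro CYC_le_0_if_card_le_1) (auto simp: simple_graph_def)
  ultimately show ?thesis by simp
qed

end
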